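(* Let $\Omega=B_1$ be the unit ball, and assume (H0), (H0'), (H1) with $\rho=1$, and (H2). Then there exists $c>0$ such that for every $u\in\mathcal{H}_{J,0}(B_1)$ $$\mathcal{E}(u,u)\ge c\int_{B_1}|u(x)|^2M(1-|x|)\,dx,\qquad M(r)=\int_r^1\frac{\ell(s)}{s}\,ds.$$
   Context: $N\ge1$, $B_\varepsilon=\{|z|<\varepsilon\}$. (H0): $J:\mathbb{R}^N\times\mathbb{R}^N\to[0,\infty)$ measurable, $J(x,y)=J(y,x)$, $\sup_x\int\min(1,|x-y|^2)J(x,y)\,dy<\infty$. (H0'): $J(x,y)\ge\mathcal{K}(x-y)\ge0$ with $\mathcal{K}\notin L^1(B_\varepsilon)$ for all $\varepsilon>0$. (H1) with $\rho=1$: there is $\ell:(0,1)\to(0,\infty)$, bounded above and below by positive constants on $[\varepsilon,1)$ for every $\varepsilon\in(0,1)$, with $\mathcal{K}(z)=|z|^{-N}\ell(|z|)$ for $0<|z|<1$ and $M(r)=\int_r^1\ell(s)/s\,ds\to\infty$ as $r\to0^+$. (H2): $\lim_{s\to0^+}\ell(\lambda s)/\ell(s)=1$ for all $\lambda>0$. For a bounded open $\Omega$: $Q_\Omega=(\Omega^c\times\Omega^c)^c$, $\mathcal{E}(u,v)=\frac12\iint_{Q_\Omega}(u(x)-u(y))(v(x)-v(y))J(x,y)\,dx\,dy$, and $\mathcal{H}_{J,0}(\Omega)$ is the set of measurable $u:\mathbb{R}^N\to\mathbb{R}$ with $u|_\Omega\in L^2(\Omega)$, $\mathcal{E}(u,u)<\infty$,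 $u=0$ a.e. on $\Omega^c$. *)

theory Defs
  imports "HOL-Analysis.Analysis"
begin

definition QOmega :: "'a set \<Rightarrow> ('a \<times> 'a) set" where
  "QOmega \<Omega> = - ((- \<Omega>) \<times> (- \<Omega>))"

definition energy :: "('a::euclidean_space \<Rightarrow> 'a \<Rightarrow> real) \<Rightarrow> 'a set \<Rightarrow> ('a \<Rightarrow> real) \<Rightarrow> ennreal" where
  "energy J \<Omega> u = ennreal (1/2) *
     (\<integral>\<^sup>+ z \<in> QOmega \<Omega>. ennreal ((u (fst z) - u (snd z))\<^sup>2 * J (fst z) (snd z)) \<partial>lebesgue)"

definition HJ0 :: "('a::euclidean_space \<Rightarrow> 'a \<Rightarrow> real) \<Rightarrow> 'a set \<Rightarrow> ('a \<Rightarrow> real) set" where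
  "HJ0 J \<Omega> = {u. u \<in> borel_measurable lebesgue
               \<and> (\<integral>\<^sup>+ x \<in> \<Omega>. ennreal ((u x)\<^sup>2) \<partial>lebesgue) < \<infinity>
               \<and> energy J \<Omega> u < \<infinity>
               \<and> (AE x in lebesgue. x \<notin> \<Omega> \<longrightarrow> u x = 0)}"

definition Mfun :: "(real \<Rightarrow> real) \<Rightarrow> real \<Rightarrow> real" where
  "Mfun l r = (LBINT s=r..1. l s / s)"

end

theory Submission
  imports Defs
begin

text \<open>Since \<open>u\<close> vanishes outside \<open>B\<^sub>1\<close>, keeping only the interactions between \<open>B\<^sub>1\<close> and its
  complement gives \<open>\<E>(u,u) \<ge> \<integral>\<^bsub>B\<^sub>1\<^esub> u(x)\<^sup>2 \<kappa>(x) dx / 2\<close> with the killing density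
  \<open>\<kappa>(x) = \<integral>\<^bsub>|y|\<ge>1\<^esub> K(y - x) dy\<close>, so it suffices to show \<open>\<kappa>(x) \<ge> c M(1 - |x|)\<close>.
  For \<open>x \<noteq> 0\<close> the cone of directions within angle \<open>\<pi>/3\<close> of \<open>x\<close>, based at \<open>x\<close>, leaves the unit
  ball beyond radius \<open>2(1 - |x|)\<close>; integrating \<open>K\<close> over it in polar coordinates bounds \<open>\<kappa>(x)\<close>
  below by a multiple of \<open>\<integral>\<^bsub>2(1-|x|)\<^esub>\<^sup>1 \<ell>(s)/s ds\<close>. Near the sphere, (H2) with \<open>\<lambda> = 1/2\<close> gives
  \<open>\<ell>(s/2) \<le> 2\<ell>(s)\<close> for small \<open>s\<close>, so \<open>M(1 - |x|)\<close> is at most three times that tail. Away from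
  the sphere \<open>\<ell>\<close> is bounded above and below, and both \<open>M(1 - |x|)\<close> and a tail of \<open>\<kappa>(x)\<close> are
  comparable to \<open>|x|\<close>.\<close>

lemma emeasure_cone_ball_scale:
  fixes C :: "'a::euclidean_space set"
  assumes C: "C \<in> sets borel" and cone: "\<And>t z. t > 0 \<Longrightarrow> (t *\<^sub>R z \<in> C) = (z \<in> C)" and t: "t > 0"
  shows "emeasure lborel (C \<inter> ball 0 t) = ennreal (t ^ DIM('a)) * emeasure lborel (C \<inter> ball 0 1)"
proof -
  have D: "(lborel::'a measure) = density (distr lborel borel (\<lambda>x. 0 + t *\<^sub>R x)) (\<lambda>_. \<bar>t\<bar>^DIM('a))"
    by (rule lborel_affine) (use t in simp)
  have pre: "(*\<^sub>R) t -` C \<inter> (*\<^sub>R) t -` ball 0 t = C \<inter> ball 0 1"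
    using t by (auto simp: cone)
  have "emeasure lborel (C \<inter> ball 0 t) = emeasure (density (distr lborel borel (\<lambda>x. 0 + t *\<^sub>R x)) (\<lambda>_. \<bar>t\<bar>^DIM('a))) (C \<inter> ball 0 t)"
    by (subst D) (rule refl)
  also have "\<dots> = ennreal (\<bar>t\<bar>^DIM('a)) * emeasure (distr lborel borel (\<lambda>x. 0 + t *\<^sub>R x)) (C \<inter> ball 0 t)"
    using C by (simp add: emeasure_density nn_integral_cmult_indicator)
  also have "\<dots> = ennreal (t^DIM('a)) * emeasure lborel (C \<inter> ball 0 1)"
    using C t by (subst emeasure_distr) (auto simp: pre)
  finally show ?thesis .
qed

lemma emeasure_distr_norm_lessThan:
  fixes S :: "'a::euclidean_space set"
  assumes [measurable]: "S \<in> sets borel"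
  shows "emeasure (distr (density lborel (indicator S)) borel norm) {..<x} = emeasure lborel (S \<inter> ball 0 x)"
proof -
  have [measurable]: "(norm :: 'a \<Rightarrow> real) -` {..<x} \<in> sets borel"
    using measurable_sets_borel[OF borel_measurable_norm, of "{..<x}"] by auto
  have "emeasure (distr (density lborel (indicator S)) borel norm) {..<x}
      = (\<integral>\<^sup>+ z. indicator S z * indicator ((norm :: 'a \<Rightarrow> real) -` {..<x}) z \<partial>lborel)"
    by (subst emeasure_distr, measurable, subst emeasure_density) (auto simp: mult.commute)
  also have "\<dots> = (\<integral>\<^sup>+ z. indicator (S \<inter> ball 0 x) z \<partial>lborel)"
    by (intro nn_integral_cong) (auto split: split_indicator)
  finally show ?thesis by simp
qed

lemma emeasure_radial_density_lessThan:
  assumes "0 < x" and "1 \<le> N"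
  shows "emeasure (density lborel (\<lambda>r. indicator {0..1} r * ennreal (real N * r^(N-1)) * \<omega>)) {..<x}
    = ennreal (min x 1 ^ N) * \<omega>"
proof -
  define m where "m = min x 1"
  have m: "0 < m" "m \<le> 1" using assms by (auto simp: m_def)
  have "emeasure (density lborel (\<lambda>r. indicator {0..1} r * ennreal (real N * r^(N-1)) * \<omega>)) {..<x}
      = (\<integral>\<^sup>+ r. \<omega> * (ennreal (real N * r^(N-1)) * indicator {0..m} r) \<partial>lborel)"
    apply (subst emeasure_density, simp, simp)
    apply (rule nn_integral_cong_AE)
    using AE_lborel_singleton[of x]
    by eventually_elim (auto simp: m_def mult.commute split: split_indicator)
  also have "\<dots> = \<omega> * (\<integral>\<^sup>+ r. ennreal (real N * r^(N-1)) * indicator {0..m} r \<partial>lborel)"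
    by (rule nn_integral_cmult) simp
  also have "(\<integral>\<^sup>+ r. ennreal (real N * r^(N-1)) * indicator {0..m} r \<partial>lborel) = m ^ N - 0 ^ N"
    by (rule nn_integral_FTC_Icc[where F="\<lambda>r. r ^ N"]) (use m in \<open>auto intro!: derivative_eq_intros\<close>)
  finally show ?thesis using assms(2) by (simp add: m_def mult.commute power_0_left)
qed

lemma distr_norm_cone_ball:
  fixes C :: "'a::euclidean_space set"
  assumes C[measurable]: "C \<in> sets borel" and cone: "\<And>t z. t > 0 \<Longrightarrow> (t *\<^sub>R z \<in> C) = (z \<in> C)"
  shows "distr (density lborel (indicator (C \<inter> ball 0 1))) borel norm
    = density lborel (\<lambda>r. indicator {0..1} r * ennreal (real DIM('a) * r^(DIM('a)-1)) * emeasure lborel (C \<inter> ball 0 1))"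
    (is "?\<mu> = ?\<nu>")
proof (rule measure_eqI_generator_eq_countable[where E="range lessThan" and \<Omega>=UNIV and A="range (\<lambda>n::nat. {..<real n})"])
  define \<omega> where "\<omega> = emeasure lborel (C \<inter> ball 0 1)"
  have [measurable]: "C \<inter> ball 0 1 \<in> sets borel" by auto
  have N1: "1 \<le> DIM('a)" by (simp add: Suc_leI)
  show "Int_stable (range lessThan :: real set set)"
    by (clarsimp simp: Int_stable_def) (metis greaterThan_Int_greaterThan rangeI)
  show "sets ?\<mu> = sigma_sets UNIV (range lessThan)" "sets ?\<nu> = sigma_sets UNIV (range lessThan)"
    by (simp_all add: borel_Iio)
  show "\<Union> (range (\<lambda>n::nat. {..<real n})) = UNIV"
    by (auto intro: reals_Archimedean2)
  show "emeasure ?\<mu> X = emeasure ?\<nu> X" if "X \<in> range lessThan" for X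
  proof -
    obtain x where X: "X = {..<x}" using \<open>X \<in> range lessThan\<close> by auto
    show ?thesis
    proof (cases "x \<le> 0")
      case True
      have "(\<lambda>r. indicator {0..1} r * ennreal (real DIM('a) * r^(DIM('a)-1)) * emeasure lborel (C \<inter> ball 0 1) * indicator {..<x} r)
          = (\<lambda>_. 0)"
        using True by (intro ext) (simp split: split_indicator)
      then have "emeasure ?\<nu> {..<x} = 0"
        by (subst emeasure_density) simp_all
      moreover have "C \<inter> ball 0 1 \<inter> ball 0 x = {}" using True by (simp add: ball_empty)
      ultimately show ?thesis unfolding X by (simp add: emeasure_distr_norm_lessThan)
    next
      case False
      then have x: "0 < x" and m: "0 < min x 1" by simp_all
      have "C \<inter> ball 0 1 \<inter> ball 0 x = C \<inter> ball 0 (min x 1)" by auto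
      then have "emeasure ?\<mu> {..<x} = emeasure lborel (C \<inter> ball 0 (min x 1))"
        by (simp add: emeasure_distr_norm_lessThan)
      also have "\<dots> = ennreal (min x 1 ^ DIM('a)) * \<omega>"
        unfolding \<omega>_def by (rule emeasure_cone_ball_scale[OF C cone m])
      also have "\<dots> = emeasure ?\<nu> {..<x}"
        using emeasure_radial_density_lessThan[OF x N1, where \<omega>=\<omega>] unfolding \<omega>_def by simp
      finally show ?thesis unfolding X .
    qed
  qed
  fix X assume "X \<in> range (\<lambda>n::nat. {..<real n})"
  then obtain n where X: "X = {..<real n}" by auto
  have "emeasure ?\<mu> X = emeasure (density lborel (indicator (C \<inter> ball 0 1))) (norm -` X)"
    unfolding X by (subst emeasure_distr) auto
  also have "\<dots> \<le> emeasure (density lborel (indicator (C \<inter> ball 0 1))) UNIV"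
    by (rule emeasure_mono) auto
  also have "\<dots> = emeasure lborel (C \<inter> ball 0 1)"
    by (simp add: emeasure_density)
  also have "\<dots> \<le> emeasure lborel (ball (0::'a) 1)"
    by (rule emeasure_mono) auto
  finally show "emeasure ?\<mu> X \<noteq> \<infinity>"
    using emeasure_lborel_ball_finite[of "0::'a" 1] by (auto simp: top_unique)
next
  show "range lessThan \<subseteq> Pow (UNIV :: real set)" by simp
  show "range (\<lambda>n::nat. {..<real n}) \<subseteq> range lessThan" by auto
  show "countable (range (\<lambda>n::nat. {..<real n}))" by simp
qed

lemma nn_integral_cone_ball_radial:
  fixes C :: "'a::euclidean_space set" and f :: "real \<Rightarrow> ennreal"
  assumes C[measurable]: "C \<in> sets borel" and cone: "\<And>t z. t > 0 \<Longrightarrow> (t *\<^sub>R z \<in> C) = (z \<in> C)"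
    and f[measurable]: "f \<in> borel_measurable borel"
  shows "(\<integral>\<^sup>+ z. indicator (C \<inter> ball 0 1) z * f (norm z) \<partial>lborel) =
    (\<integral>\<^sup>+ r. (indicator {0..1} r * ennreal (real DIM('a) * r^(DIM('a)-1)) * emeasure lborel (C \<inter> ball 0 1)) * f r \<partial>lborel)"
proof -
  have [measurable]: "C \<inter> ball 0 1 \<in> sets borel" by auto
  have "(\<integral>\<^sup>+ z. indicator (C \<inter> ball 0 1) z * f (norm z) \<partial>lborel)
      = (\<integral>\<^sup>+ r. f r \<partial>distr (density lborel (indicator (C \<inter> ball 0 1))) borel norm)"
    by (simp add: nn_integral_distr, subst nn_integral_density) auto
  then show ?thesis
    by (simp add: distr_norm_cone_ball[OF C cone] nn_integral_density)
qed

definition truncated_kernel :: "(real \<Rightarrow> real) \<Rightarrow> 'a::euclidean_space \<Rightarrow> real" where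
  "truncated_kernel l z =
     (if 0 < norm z \<and> norm z < 1 then norm z powr (- real DIM('a)) * l (norm z) else 0)"

text \<open>\<open>killing_density l x\<close> is \<open>\<integral>\<^bsub>|y|\<ge>1\<^esub> K(y - x) dy\<close>, and \<open>tail_integral l a\<close> is \<open>M(a)\<close>
  computed in \<open>ennreal\<close>, which avoids integrability side conditions.\<close>

definition killing_density :: "(real \<Rightarrow> real) \<Rightarrow> 'a::euclidean_space \<Rightarrow> ennreal" where
  "killing_density l x = (\<integral>\<^sup>+ y. indicator (- ball 0 1) y * ennreal (truncated_kernel l (y - x)) \<partial>lborel)"

definition tail_integral :: "(real \<Rightarrow> real) \<Rightarrow> real \<Rightarrow> ennreal" where
  "tail_integral l a = (\<integral>\<^sup>+ r. indicator {a..<1} r * ennreal (l r / r) \<partial>lborel)"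

lemma borel_measurable_truncated_kernel [measurable]:
  assumes [measurable]: "l \<in> borel_measurable borel"
  shows "(truncated_kernel l :: 'a::euclidean_space \<Rightarrow> real) \<in> borel_measurable borel"
  unfolding truncated_kernel_def by measurable

lemma nn_integral_cone_truncated_kernel:
  fixes C :: "'a::euclidean_space set"
  assumes C[measurable]: "C \<in> sets borel" and cone: "\<And>t z. t > 0 \<Longrightarrow> (t *\<^sub>R z \<in> C) = (z \<in> C)"
    and l[measurable]: "l \<in> borel_measurable borel"
    and lnn: "\<And>s. 0 < s \<Longrightarrow> s < 1 \<Longrightarrow> 0 \<le> l s" and a: "0 < a"
  shows "(\<integral>\<^sup>+ z. indicator (C \<inter> ball 0 1) z * (indicator {a..<1} (norm z) * ennreal (truncated_kernel l z)) \<partial>lborel)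
       = ennreal (real DIM('a)) * emeasure lborel (C \<inter> ball 0 1) * tail_integral l a"
proof -
  define N where "N = DIM('a)"
  have N1: "1 \<le> N" unfolding N_def by (simp add: Suc_leI)
  define f where "f r = indicator {a..<1} r * ennreal (r powr (- real N) * l r)" for r
  have f[measurable]: "f \<in> borel_measurable borel" unfolding f_def by measurable
  have "(\<integral>\<^sup>+ z. indicator (C \<inter> ball 0 1) z * (indicator {a..<1} (norm z) * ennreal (truncated_kernel l z)) \<partial>lborel)
      = (\<integral>\<^sup>+ z. indicator (C \<inter> ball 0 1) z * f (norm z) \<partial>lborel)"
    using a by (intro nn_integral_cong) (simp add: f_def truncated_kernel_def N_def split: split_indicator)
  also have "\<dots> = (\<integral>\<^sup>+ r. (indicator {0..1} r * ennreal (real N * r^(N-1)) * emeasure lborel (C \<inter> ball 0 1)) * f r \<partial>lborel)"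
    unfolding N_def by (rule nn_integral_cone_ball_radial[OF C cone f])
  also have "\<dots> = (\<integral>\<^sup>+ r. (ennreal (real N) * emeasure lborel (C \<inter> ball 0 1)) * (indicator {a..<1} r * ennreal (l r / r)) \<partial>lborel)"
  proof (intro nn_integral_cong)
    fix r :: real
    show "indicator {0..1} r * ennreal (real N * r^(N-1)) * emeasure lborel (C \<inter> ball 0 1) * f r
        = (ennreal (real N) * emeasure lborel (C \<inter> ball 0 1)) * (indicator {a..<1} r * ennreal (l r / r))"
    proof (cases "a \<le> r \<and> r < 1")
      case True
      then have r: "0 < r" using a by auto
      have "r^(N-1) = r powr (real N - 1)" using r N1 by (simp add: powr_realpow[symmetric])
      then have "r^(N-1) * r powr (- real N) = r powr (-1)" using r by (simp add: powr_add[symmetric])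
      then have "r^(N-1) * (r powr (- real N) * l r) = l r / r"
        using r by (simp add: powr_minus divide_inverse mult.assoc[symmetric])
      then have "real N * r^(N-1) * (r powr (- real N) * l r) = real N * (l r / r)"
        by (simp add: mult.assoc)
      moreover have "0 \<le> l r" using lnn True r by auto
      ultimately have "ennreal (real N * r^(N-1)) * ennreal (r powr (- real N) * l r) = ennreal (real N) * ennreal (l r / r)"
        using r by (metis ennreal_mult divide_nonneg_pos mult_nonneg_nonneg of_nat_0_le_iff powr_ge_zero zero_le_power less_imp_le)
      then show ?thesis using True r by (simp add: f_def ac_simps)
    next
      case False
      then show ?thesis by (auto simp: f_def split: split_indicator)
    qed
  qed
  also have "\<dots> = ennreal (real N) * emeasure lborel (C \<inter> ball 0 1) * tail_integral l a"
    unfolding tail_integral_def by (rule nn_integral_cmult) measurable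
  finally show ?thesis unfolding N_def .
qed

lemma ball_subset_cone_ball:
  fixes e :: "'a::euclidean_space"
  assumes e: "norm e = 1"
  shows "ball ((3/4) *\<^sub>R e) (1/8) \<subseteq> {z. norm z \<le> 2 * (z \<bullet> e)} \<inter> ball 0 1"
proof
  fix w assume w: "w \<in> ball ((3/4) *\<^sub>R e) (1/8)"
  define d where "d = w - (3/4) *\<^sub>R e"
  have d: "norm d < 1/8" using w by (simp add: d_def dist_norm norm_minus_commute)
  have "\<bar>d \<bullet> e\<bar> \<le> norm d * norm e" by (rule Cauchy_Schwarz_ineq2)
  then have de: "\<bar>d \<bullet> e\<bar> < 1/8" using d e by simp
  have we: "w \<bullet> e = 3/4 + d \<bullet> e" unfolding d_def using e by (simp add: algebra_simps dot_square_norm)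
  have "norm w \<le> norm ((3/4) *\<^sub>R e) + norm d" unfolding d_def by (metis norm_triangle_sub)
  then have nw: "norm w < 7/8" using d e by simp
  show "w \<in> {z. norm z \<le> 2 * (z \<bullet> e)} \<inter> ball 0 1"
    using nw we de by auto
qed

text \<open>\<open>{z. |z| \<le> 2 z \<bullet> e}\<close> is the cone of directions within angle \<open>\<pi>/3\<close> of \<open>e\<close>.\<close>

lemma killing_density_ge_cone_tail:
  fixes l :: "real \<Rightarrow> real" and e x :: "'a::euclidean_space"
  assumes l[measurable]: "l \<in> borel_measurable borel"
    and lnn: "\<And>s. 0 < s \<Longrightarrow> s < 1 \<Longrightarrow> 0 \<le> l s"
    and e: "norm e = 1" and a: "0 < a"
    and outside: "\<And>z. norm z \<le> 2 * (z \<bullet> e) \<Longrightarrow> a \<le> norm z \<Longrightarrow> norm z < 1 \<Longrightarrow> 1 \<le> norm (x + z)"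
  shows "ennreal (real DIM('a) * measure lborel (ball (0::'a) (1/8))) * tail_integral l a \<le> killing_density l x"
proof -
  define C where "C = {z::'a. norm z \<le> 2 * (z \<bullet> e)}"
  have C[measurable]: "C \<in> sets borel" unfolding C_def
    by (intro borel_closed closed_Collect_le) (auto intro!: continuous_intros)
  have cone: "(t *\<^sub>R z \<in> C) = (z \<in> C)" if "t > 0" for t z
    using that unfolding C_def by (auto simp: mult_le_cancel_left_pos)
  have "ennreal (measure lborel (ball (0::'a) (1/8))) = emeasure lborel (ball (0::'a) (1/8))"
    using emeasure_lborel_ball_finite[of "0::'a" "1/8"] by (intro emeasure_eq_ennreal_measure[symmetric]) auto
  also have "\<dots> = emeasure lborel (ball ((3/4) *\<^sub>R e) (1/8))"
    using emeasure_lebesgue_ball_conv_unit_ball[of "1/8" "(3/4) *\<^sub>R e"]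
      emeasure_lebesgue_ball_conv_unit_ball[of "1/8" "0::'a"] by simp
  also have "\<dots> \<le> emeasure lborel (C \<inter> ball 0 1)"
    unfolding C_def by (intro emeasure_mono ball_subset_cone_ball e) auto
  finally have small_ball: "ennreal (measure lborel (ball (0::'a) (1/8))) \<le> emeasure lborel (C \<inter> ball 0 1)" .
  have "ennreal (real DIM('a) * measure lborel (ball (0::'a) (1/8))) * tail_integral l a
      \<le> ennreal (real DIM('a)) * emeasure lborel (C \<inter> ball 0 1) * tail_integral l a"
    using small_ball by (simp add: ennreal_mult mult_left_mono mult_right_mono)
  also have "\<dots> = (\<integral>\<^sup>+ z. indicator (C \<inter> ball 0 1) z * (indicator {a..<1} (norm z) * ennreal (truncated_kernel l z)) \<partial>lborel)"
    by (rule nn_integral_cone_truncated_kernel[OF C cone l lnn a, symmetric])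
  also have "\<dots> \<le> (\<integral>\<^sup>+ z. indicator (- ball 0 1) (x + z) * ennreal (truncated_kernel l (x + z - x)) \<partial>lborel)"
  proof (intro nn_integral_mono)
    fix z :: 'a
    have "1 \<le> norm (x + z)" if "z \<in> C" "a \<le> norm z" "norm z < 1"
      using outside that by (simp add: C_def)
    then show "indicator (C \<inter> ball 0 1) z * (indicator {a..<1} (norm z) * ennreal (truncated_kernel l z))
        \<le> indicator (- ball 0 1) (x + z) * ennreal (truncated_kernel l (x + z - x))"
      by (auto split: split_indicator)
  qed
  also have "\<dots> = killing_density l x"
    unfolding killing_density_def by (subst lborel_distr_plus[of x, symmetric], subst nn_integral_distr) auto
  finally show ?thesis .
qed

lemma nn_integral_Ico_doubling_le:
  fixes l :: "real \<Rightarrow> real"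
  assumes l[measurable]: "l \<in> borel_measurable borel"
    and doubling: "\<And>s. 0 < s \<Longrightarrow> s < d \<Longrightarrow> l (s/2) \<le> 2 * l s"
    and \<delta>: "0 < \<delta>" "4 * \<delta> \<le> 1" "4 * \<delta> \<le> d"
  shows "(\<integral>\<^sup>+ r. indicator {\<delta>..<2*\<delta>} r * ennreal (l r / r) \<partial>lborel) \<le> 2 * tail_integral l (2 * \<delta>)"
proof -
  define g where "g r = indicator {\<delta>..<2*\<delta>} r * ennreal (l r / r)" for r
  have g[measurable]: "g \<in> borel_measurable borel" unfolding g_def by measurable
  have "(\<integral>\<^sup>+ r. g r \<partial>lborel) = ennreal \<bar>1/2\<bar> * (\<integral>\<^sup>+ u. g (0 + (1/2) * u) \<partial>lborel)"
    by (rule nn_integral_real_affine) auto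
  also have "\<dots> = (\<integral>\<^sup>+ u. ennreal (1/2) * g (u/2) \<partial>lborel)"
    by (subst nn_integral_cmult) auto
  also have "\<dots> \<le> (\<integral>\<^sup>+ u. 2 * (indicator {2*\<delta>..<1} u * ennreal (l u / u)) \<partial>lborel)"
  proof (intro nn_integral_mono)
    fix u :: real
    show "ennreal (1/2) * g (u/2) \<le> 2 * (indicator {2*\<delta>..<1} u * ennreal (l u / u))"
    proof (cases "2*\<delta> \<le> u \<and> u < 4*\<delta>")
      case True
      then have u: "0 < u" "u < d" "u < 1" using \<delta> by auto
      have "ennreal (1/2) * g (u/2) = ennreal (1/2 * (l (u/2) / (u/2)))"
        using True by (subst ennreal_mult') (simp_all add: g_def)
      also have "\<dots> = ennreal (l (u/2) / u)" by simp
      also have "\<dots> \<le> ennreal (2 * (l u / u))"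
        using doubling[of u] u by (intro ennreal_leI) (simp add: divide_right_mono)
      also have "\<dots> = 2 * ennreal (l u / u)" by (subst ennreal_mult') simp_all
      finally show ?thesis using True u by simp
    next
      case False
      then show ?thesis by (simp add: g_def)
    qed
  qed
  also have "\<dots> = 2 * tail_integral l (2 * \<delta>)"
    unfolding tail_integral_def by (rule nn_integral_cmult) auto
  finally show ?thesis unfolding g_def .
qed

lemma tail_integral_le_3_double:
  fixes l :: "real \<Rightarrow> real"
  assumes l[measurable]: "l \<in> borel_measurable borel"
    and doubling: "\<And>s. 0 < s \<Longrightarrow> s < d \<Longrightarrow> l (s/2) \<le> 2 * l s"
    and \<delta>: "0 < \<delta>" "4 * \<delta> \<le> 1" "4 * \<delta> \<le> d"
  shows "tail_integral l \<delta> \<le> 3 * tail_integral l (2 * \<delta>)"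
proof -
  have "tail_integral l \<delta>
      = (\<integral>\<^sup>+ r. indicator {\<delta>..<2*\<delta>} r * ennreal (l r / r) + indicator {2*\<delta>..<1} r * ennreal (l r / r) \<partial>lborel)"
    unfolding tail_integral_def using \<delta> by (intro nn_integral_cong) (auto split: split_indicator)
  also have "\<dots> = (\<integral>\<^sup>+ r. indicator {\<delta>..<2*\<delta>} r * ennreal (l r / r) \<partial>lborel) + tail_integral l (2 * \<delta>)"
    unfolding tail_integral_def by (rule nn_integral_add) auto
  also have "\<dots> \<le> 2 * tail_integral l (2 * \<delta>) + tail_integral l (2 * \<delta>)"
    by (intro add_right_mono nn_integral_Ico_doubling_le[OF l doubling \<delta>])
  also have "\<dots> = (2 + 1) * tail_integral l (2 * \<delta>)"
    by (simp only: distrib_right mult_1)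
  also have "(2 + 1 :: ennreal) = 3" by simp
  finally show ?thesis .
qed

lemma tail_integral_le_linear:
  fixes l :: "real \<Rightarrow> real"
  assumes l[measurable]: "l \<in> borel_measurable borel"
    and b: "\<And>s. \<delta>0 \<le> s \<Longrightarrow> s < 1 \<Longrightarrow> l s \<le> b" and b0: "0 \<le> b"
    and \<delta>: "0 < \<delta>0" "\<delta>0 \<le> \<delta>" "\<delta> \<le> 1"
  shows "tail_integral l \<delta> \<le> ennreal (b / \<delta>0 * (1 - \<delta>))"
proof -
  have "tail_integral l \<delta> \<le> (\<integral>\<^sup>+ r. ennreal (b / \<delta>0) * indicator {\<delta>..<1} r \<partial>lborel)"
    unfolding tail_integral_def
  proof (intro nn_integral_mono)
    fix r :: real
    show "indicator {\<delta>..<1} r * ennreal (l r / r) \<le> ennreal (b / \<delta>0) * indicator {\<delta>..<1} r"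
    proof (cases "\<delta> \<le> r \<and> r < 1")
      case True
      then have r: "\<delta>0 \<le> r" "0 < r" using \<delta> by auto
      have "l r / r \<le> b / r" using b[of r] True r by (simp add: divide_right_mono)
      also have "\<dots> \<le> b / \<delta>0" using r b0 \<delta> by (simp add: frac_le)
      finally show ?thesis using True by (simp add: ennreal_leI)
    qed simp
  qed
  also have "\<dots> = ennreal (b / \<delta>0) * ennreal (1 - \<delta>)"
    using \<delta> by (subst nn_integral_cmult_indicator) auto
  also have "\<dots> = ennreal (b / \<delta>0 * (1 - \<delta>))"
    by (rule ennreal_mult[symmetric]) (use \<delta> b0 in auto)
  finally show ?thesis .
qed

lemma tail_integral_ge_near_one:
  fixes l :: "real \<Rightarrow> real"
  assumes l[measurable]: "l \<in> borel_measurable borel"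
    and a: "\<And>s. 3/4 \<le> s \<Longrightarrow> s < 1 \<Longrightarrow> a \<le> l s" and a0: "0 \<le> a"
    and t: "0 \<le> t" "t \<le> 1"
  shows "ennreal (a * (t/4)) \<le> tail_integral l (1 - t/4)"
proof -
  have "ennreal (a * (t/4)) = ennreal a * ennreal (t/4)"
    by (rule ennreal_mult') (use a0 in simp)
  also have "\<dots> = (\<integral>\<^sup>+ r. ennreal a * indicator {1 - t/4..<1} r \<partial>lborel)"
    using t a0 by (subst nn_integral_cmult_indicator) auto
  also have "\<dots> \<le> tail_integral l (1 - t/4)"
    unfolding tail_integral_def
  proof (intro nn_integral_mono)
    fix r :: real
    show "ennreal a * indicator {1 - t/4..<1} r \<le> indicator {1 - t/4..<1} r * ennreal (l r / r)"
    proof (cases "1 - t/4 \<le> r \<and> r < 1")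
      case True
      then have r: "3/4 \<le> r" "r < 1" using t by auto
      have "a \<le> l r" using a r by auto
      also have "l r \<le> l r / r"
      proof -
        have "l r * r \<le> l r * 1" using r a0 \<open>a \<le> l r\<close> by (intro mult_left_mono) auto
        then show ?thesis using r by (simp add: le_divide_eq)
      qed
      finally show ?thesis using True by (simp add: ennreal_leI)
    qed simp
  qed
  finally show ?thesis .
qed

lemma norm_add_cone_ge_one:
  fixes e z :: "'a::euclidean_space"
  assumes e: "norm e = 1" and t: "0 \<le> t" and z: "norm z \<le> 2 * (z \<bullet> e)" and zz: "2 * (1 - t) \<le> norm z"
  shows "1 \<le> norm (t *\<^sub>R e + z)"
proof -
  have "(t *\<^sub>R e + z) \<bullet> e = t + z \<bullet> e" using e by (simp add: algebra_simps dot_square_norm)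
  also have "\<dots> \<ge> 1" using z zz by argo
  finally have "1 \<le> (t *\<^sub>R e + z) \<bullet> e" .
  also have "\<dots> \<le> norm (t *\<^sub>R e + z) * norm e" by (rule norm_cauchy_schwarz)
  finally show ?thesis using e by simp
qed

lemma norm_add_cone_ge_one':
  fixes e z :: "'a::euclidean_space"
  assumes e: "norm e = 1" and t: "0 \<le> t" "t \<le> 1" and z: "norm z \<le> 2 * (z \<bullet> e)" and zz: "1 - t/4 \<le> norm z"
  shows "1 \<le> norm (t *\<^sub>R e + z)"
proof -
  define \<rho> where "\<rho> = norm z"
  have ee: "e \<bullet> e = 1" using e by (simp add: dot_square_norm)
  have s1: "(norm (t *\<^sub>R e + z))^2 = (t *\<^sub>R e + z) \<bullet> (t *\<^sub>R e + z)" by (simp add: power2_norm_eq_inner)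
  have s2: "(t *\<^sub>R e + z) \<bullet> (t *\<^sub>R e + z) = t^2 * (e \<bullet> e) + 2 * t * (z \<bullet> e) + z \<bullet> z"
    by (simp add: inner_commute power2_eq_square algebra_simps)
  have s3: "z \<bullet> z = \<rho>^2" by (simp add: \<rho>_def power2_norm_eq_inner)
  have sq: "(norm (t *\<^sub>R e + z))^2 = t^2 + 2 * t * (z \<bullet> e) + \<rho>^2"
    using s1 s2 s3 ee by simp
  have "t^2 + 2 * t * (z \<bullet> e) + \<rho>^2 \<ge> t * \<rho> + \<rho>^2"
  proof -
    have "t * \<rho> \<le> t * (2 * (z \<bullet> e))" using z t unfolding \<rho>_def by (intro mult_left_mono) auto
    moreover have "0 \<le> t^2" by simp
    ultimately show ?thesis by linarith
  qed
  moreover have "t * \<rho> + \<rho>^2 \<ge> 1"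
  proof -
    have r: "1 - t/4 \<le> \<rho>" "0 \<le> 1 - t/4" using zz t unfolding \<rho>_def by auto
    have "(1 - t/4)^2 \<le> \<rho>^2" using r by (simp add: power_mono)
    moreover have "t * (1 - t/4) \<le> t * \<rho>" using r t by (simp add: mult_left_mono)
    moreover have "(1 - t/4)^2 + t * (1 - t/4) \<ge> 1"
    proof -
      have tt: "t * t \<le> t" using t by (simp add: mult_left_le)
      have "(1 - t/4)^2 + t * (1 - t/4) = 1 + t/2 - 3/16*(t*t)" by (simp add: power2_eq_square algebra_simps)
      then show ?thesis using tt t by linarith
    qed
    ultimately show ?thesis by linarith
  qed
  ultimately have "1 \<le> (norm (t *\<^sub>R e + z))^2" using sq by linarith
  then show ?thesis using power2_le_imp_le[of 1 "norm (t *\<^sub>R e + z)"] by simp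
qed

lemma borel_measurable_tail_integral:
  fixes l :: "real \<Rightarrow> real"
  assumes [measurable]: "l \<in> borel_measurable borel" and f: "f \<in> borel_measurable M"
  shows "(\<lambda>x. tail_integral l (f x)) \<in> borel_measurable M"
proof -
  have eq: "indicator {a..<1} r * ennreal (l r / r) = (if a \<le> r \<and> r < 1 then ennreal (l r / r) else 0)"
    for a r :: real
    by (simp split: split_indicator)
  have "tail_integral l \<in> borel_measurable borel"
    unfolding tail_integral_def eq by measurable
  then show ?thesis by (rule measurable_compose[OF f])
qed

lemma Mfun_le_tail_integral:
  fixes l :: "real \<Rightarrow> real"
  assumes l[measurable]: "l \<in> borel_measurable borel"
    and lnn: "\<And>s. 0 < s \<Longrightarrow> s < 1 \<Longrightarrow> 0 \<le> l s"
    and a: "0 < a" "a \<le> 1"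
  shows "ennreal (Mfun l a) \<le> tail_integral l a"
proof -
  have "Mfun l a = (LBINT s:{a..1}. l s / s)"
    unfolding Mfun_def by (metis interval_integral_Icc one_ereal_def a(2))
  also have "\<dots> = (\<integral> s. indicator {a..1} s * (l s / s) \<partial>lborel)"
    by (simp add: set_lebesgue_integral_def)
  also have "\<dots> = enn2real (\<integral>\<^sup>+ s. ennreal (indicator {a..1} s * (l s / s)) \<partial>lborel)"
  proof (rule integral_eq_nn_integral)
    show "(\<lambda>s. indicator {a..1} s * (l s / s)) \<in> borel_measurable lborel" by measurable
    show "AE s in lborel. 0 \<le> indicator {a..1} s * (l s / s)"
      using AE_lborel_singleton[of 1]
    proof eventually_elim
      case (elim s)
      show ?case
      proof (cases "a \<le> s \<and> s \<le> 1")
        case True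
        then have "0 < s" "s < 1" using a elim by auto
        then show ?thesis using True lnn[of s] by simp
      qed simp
    qed
  qed
  also have "(\<integral>\<^sup>+ s. ennreal (indicator {a..1} s * (l s / s)) \<partial>lborel) = tail_integral l a"
    unfolding tail_integral_def
    apply (rule nn_integral_cong_AE)
    using AE_lborel_singleton[of 1]
    by eventually_elim (auto split: split_indicator)
  finally have eq: "Mfun l a = enn2real (tail_integral l a)" .
  show ?thesis
  proof (cases "tail_integral l a = \<infinity>")
    case True then show ?thesis by simp
  next
    case False then show ?thesis unfolding eq by (simp add: less_top)
  qed
qed

lemma truncated_kernel_le_J:
  fixes J :: "'a::euclidean_space \<Rightarrow> 'a \<Rightarrow> real"
  assumes J_sym: "\<And>x y. J x y = J y x"
    and K_nonneg: "\<And>z. K z \<ge> 0"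
    and J_K: "\<And>x y. J x y \<ge> K (x - y)"
    and K_form: "\<And>z. 0 < norm z \<Longrightarrow> norm z < 1 \<Longrightarrow> K z = norm z powr (- real DIM('a)) * l (norm z)"
  shows "truncated_kernel l (y - x) \<le> J x y"
proof -
  have "truncated_kernel l (y - x) \<le> K (y - x)"
    using K_form[of "y - x"] K_nonneg[of "y - x"] unfolding truncated_kernel_def by auto
  also have "\<dots> \<le> J y x" by (rule J_K)
  finally show ?thesis by (simp add: J_sym)
qed

lemma energy_ge_killing_integral:
  fixes J :: "'a::euclidean_space \<Rightarrow> 'a \<Rightarrow> real"
  assumes kernel: "\<And>x y. truncated_kernel l (y - x) \<le> J x y"
    and l[measurable]: "l \<in> borel_measurable borel"
    and u: "u \<in> HJ0 J (ball 0 1)"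
  obtains v where "v \<in> borel_measurable borel" "AE x in lborel. u x = v x"
    "ennreal (1/2) * (\<integral>\<^sup>+ x. indicator (ball 0 1) x * ennreal ((v x)\<^sup>2) * killing_density l x \<partial>lborel)
      \<le> energy J (ball 0 1) u"
proof -
  from u have "u \<in> borel_measurable lebesgue" and "AE x in lebesgue. x \<notin> ball 0 1 \<longrightarrow> u x = 0"
    by (auto simp: HJ0_def)
  then obtain v where v[measurable]: "v \<in> borel_measurable borel" and uv: "AE x in lborel. u x = v x"
    and zero: "AE x in lborel. x \<notin> ball 0 1 \<longrightarrow> u x = 0"
    using completion_ex_borel_measurable_real by (fastforce simp: AE_completion_iff)
  from uv zero have "AE x in lborel. u x = v x \<and> (x \<notin> ball 0 1 \<longrightarrow> u x = 0)" by eventually_elim auto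
  then obtain N where NP: "{x \<in> space lborel. \<not> (u x = v x \<and> (x \<notin> ball 0 1 \<longrightarrow> u x = 0))} \<subseteq> N"
    and "emeasure lborel N = 0" "N \<in> sets lborel"
    by (rule AE_E)
  then have N: "N \<in> null_sets lborel" by (simp add: null_sets_def)
  have N1: "N \<times> UNIV \<in> null_sets (lborel \<Otimes>\<^sub>M lborel)" and N2: "UNIV \<times> N \<in> null_sets (lborel \<Otimes>\<^sub>M lborel)"
    using N by auto
  have off_N: "AE z in lborel \<Otimes>\<^sub>M lborel. fst z \<notin> N \<and> snd z \<notin> (N :: 'a set)"
    using AE_not_in[OF N1] AE_not_in[OF N2] by eventually_elim auto
  have "(\<integral>\<^sup>+ z. indicator (ball 0 1 \<times> - ball 0 1) z * ennreal ((v (fst z))\<^sup>2 * truncated_kernel l (snd z - fst z)) \<partial>(lborel \<Otimes>\<^sub>M lborel))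
      \<le> (\<integral>\<^sup>+ z. ennreal ((u (fst z) - u (snd z))\<^sup>2 * J (fst z) (snd z)) * indicator (QOmega (ball 0 1)) z \<partial>(lborel \<Otimes>\<^sub>M lborel))"
    (is "nn_integral _ ?F \<le> nn_integral _ ?G")
  proof (rule nn_integral_mono_AE)
    show "AE z in lborel \<Otimes>\<^sub>M lborel. ?F z \<le> ?G z"
      using off_N
    proof eventually_elim
      case (elim z)
      obtain x y where z: "z = (x, y)" by (cases z)
      have "(v x)\<^sup>2 * truncated_kernel l (y - x) \<le> (u x - u y)\<^sup>2 * J x y"
        if "x \<in> ball 0 1" "y \<notin> ball 0 1"
      proof -
        have "u x = v x" "u y = 0" using NP elim that unfolding z by auto
        then show ?thesis using kernel[of y x] by (simp add: mult_left_mono)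
      qed
      then show ?case unfolding z QOmega_def by (auto simp: ennreal_leI split: split_indicator)
    qed
  qed
  also have "nn_integral (lborel \<Otimes>\<^sub>M lborel) ?F = (\<integral>\<^sup>+ x. \<integral>\<^sup>+ y. ?F (x, y) \<partial>lborel \<partial>lborel)"
    by (rule lborel.nn_integral_fst[symmetric]) measurable
  also have "\<dots> = (\<integral>\<^sup>+ x. indicator (ball 0 1) x * ennreal ((v x)\<^sup>2) * killing_density l x \<partial>lborel)"
  proof (intro nn_integral_cong)
    fix x :: 'a
    have "(\<integral>\<^sup>+ y. ?F (x, y) \<partial>lborel) = (\<integral>\<^sup>+ y. (indicator (ball 0 1) x * ennreal ((v x)\<^sup>2)) *
        (indicator (- ball 0 1) y * ennreal (truncated_kernel l (y - x))) \<partial>lborel)"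
      by (intro nn_integral_cong, subst ennreal_mult') (simp_all add: indicator_times mult_ac)
    also have "\<dots> = indicator (ball 0 1) x * ennreal ((v x)\<^sup>2) * killing_density l x"
      unfolding killing_density_def by (rule nn_integral_cmult) measurable
    finally show "(\<integral>\<^sup>+ y. ?F (x, y) \<partial>lborel) = indicator (ball 0 1) x * ennreal ((v x)\<^sup>2) * killing_density l x" .
  qed
  finally show ?thesis
    using v uv by (intro that) (auto simp: energy_def nn_integral_completion lborel_prod intro!: mult_left_mono)
qed

lemma pos_of_locally_bounded_below:
  fixes l :: "real \<Rightarrow> real"
  assumes bounds: "\<And>\<epsilon>. 0 < \<epsilon> \<Longrightarrow> \<epsilon> < 1 \<Longrightarrow>
      \<exists>a b. 0 < a \<and> 0 < b \<and> (\<forall>s. \<epsilon> \<le> s \<and> s < 1 \<longrightarrow> a \<le> l s \<and> l s \<le> b)"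
    and s: "0 < s" "s < 1"
  shows "0 < l s"
  using bounds[OF s] s by force

lemma doubling_at_right_0:
  fixes l :: "real \<Rightarrow> real"
  assumes pos: "\<And>s. 0 < s \<Longrightarrow> s < 1 \<Longrightarrow> 0 < l s"
    and slow: "((\<lambda>s. l ((1/2) * s) / l s) \<longlongrightarrow> 1) (at_right 0)"
  obtains d where "0 < d" "\<And>s. 0 < s \<Longrightarrow> s < d \<Longrightarrow> l (s/2) \<le> 2 * l s"
proof -
  have "eventually (\<lambda>s. l ((1/2) * s) / l s < 2) (at_right 0)"
    using slow by (rule order_tendstoD) simp
  then obtain b where b: "0 < b" "\<And>s. 0 < s \<Longrightarrow> s < b \<Longrightarrow> l ((1/2) * s) / l s < 2"
    by (auto simp: eventually_at_right_field)
  show ?thesis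
  proof (rule that[of "min b 1"])
    fix s assume "0 < s" "s < min b 1"
    with b pos[of s] have "0 < l s" "l ((1/2) * s) / l s < 2" by auto
    then show "l (s/2) \<le> 2 * l s" by (simp add: divide_less_eq)
  qed (use b in simp)
qed

lemma killing_density_ge_tail_near_sphere:
  fixes l :: "real \<Rightarrow> real" and x :: "'a::euclidean_space"
  assumes l[measurable]: "l \<in> borel_measurable borel"
    and lnn: "\<And>s. 0 < s \<Longrightarrow> s < 1 \<Longrightarrow> 0 \<le> l s"
    and doubling: "\<And>s. 0 < s \<Longrightarrow> s < d \<Longrightarrow> l (s/2) \<le> 2 * l s"
    and x: "4 * (1 - norm x) \<le> 1" "4 * (1 - norm x) \<le> d" "norm x < 1"
  shows "ennreal (real DIM('a) * measure lborel (ball (0::'a) (1/8)) / 3) * tail_integral l (1 - norm x)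
    \<le> killing_density l x"
proof -
  define \<delta> where "\<delta> = 1 - norm x"
  have \<delta>: "0 < \<delta>" "4 * \<delta> \<le> 1" "4 * \<delta> \<le> d" and "0 < norm x" using x by (auto simp: \<delta>_def)
  define e where "e = (1 / norm x) *\<^sub>R x"
  have e: "norm e = 1" and xe: "x = norm x *\<^sub>R e" using \<open>0 < norm x\<close> by (simp_all add: e_def)
  define w where "w = real DIM('a) * measure lborel (ball (0::'a) (1/8))"
  have "ennreal (w / 3) * tail_integral l \<delta> \<le> ennreal (w / 3) * (3 * tail_integral l (2 * \<delta>))"
    by (rule mult_left_mono[OF tail_integral_le_3_double[OF l doubling \<delta>] zero_le])
  also have "\<dots> = ennreal w * tail_integral l (2 * \<delta>)"
    using ennreal_mult'[of "w / 3" 3] by (simp add: w_def mult.assoc[symmetric])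
  also have "\<dots> \<le> killing_density l x"
    unfolding w_def using \<delta>
    by (intro killing_density_ge_cone_tail[OF l lnn e]) (auto simp: \<delta>_def intro: norm_add_cone_ge_one[OF e, of "norm x", folded xe])
  finally show ?thesis by (simp add: w_def \<delta>_def)
qed

lemma killing_density_ge_tail_interior:
  fixes l :: "real \<Rightarrow> real" and x :: "'a::euclidean_space"
  assumes l[measurable]: "l \<in> borel_measurable borel"
    and lnn: "\<And>s. 0 < s \<Longrightarrow> s < 1 \<Longrightarrow> 0 \<le> l s"
    and upper: "\<And>s. \<delta> \<le> s \<Longrightarrow> s < 1 \<Longrightarrow> l s \<le> b" and lower: "\<And>s. 3/4 \<le> s \<Longrightarrow> s < 1 \<Longrightarrow> a \<le> l s"
    and ab: "0 < a" "0 < b" and \<delta>: "0 < \<delta>" "\<delta> \<le> 1 - norm x"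
  shows "ennreal (real DIM('a) * measure lborel (ball (0::'a) (1/8)) * (a * \<delta> / (4 * b))) * tail_integral l (1 - norm x)
    \<le> killing_density l x"
proof (cases "x = 0")
  case True
  then show ?thesis by (simp add: tail_integral_def)
next
  case False
  define t where "t = norm x"
  have t: "0 < t" "t \<le> 1" using False \<delta> by (auto simp: t_def)
  define e where "e = (1 / t) *\<^sub>R x"
  have e: "norm e = 1" and xe: "x = t *\<^sub>R e" using t by (simp_all add: e_def t_def)
  define w where "w = real DIM('a) * measure lborel (ball (0::'a) (1/8))"
  have w: "0 \<le> w" by (simp add: w_def)
  have "ennreal (w * (a * \<delta> / (4 * b))) * tail_integral l (1 - t)
      \<le> ennreal (w * (a * \<delta> / (4 * b))) * ennreal (b / \<delta> * (1 - (1 - t)))"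
    using upper ab \<delta> t by (intro mult_left_mono tail_integral_le_linear[OF l]) (auto simp: t_def)
  also have "\<dots> = ennreal w * ennreal (a * (t / 4))"
    using w ab \<delta> t by (simp add: ennreal_mult'[symmetric] field_simps)
  also have "\<dots> \<le> ennreal w * tail_integral l (1 - t / 4)"
    using lower ab t by (intro mult_left_mono tail_integral_ge_near_one[OF l]) auto
  also have "\<dots> \<le> killing_density l x"
    unfolding w_def using t
    by (intro killing_density_ge_cone_tail[OF l lnn e]) (auto intro: norm_add_cone_ge_one'[OF e, of t, folded xe])
  finally show ?thesis by (simp add: w_def t_def)
qed

lemma killing_density_ge_tail:
  fixes l :: "real \<Rightarrow> real"
  assumes l[measurable]: "l \<in> borel_measurable borel"
    and bounds: "\<And>\<epsilon>. 0 < \<epsilon> \<Longrightarrow> \<epsilon> < 1 \<Longrightarrow>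
      \<exists>a b. 0 < a \<and> 0 < b \<and> (\<forall>s. \<epsilon> \<le> s \<and> s < 1 \<longrightarrow> a \<le> l s \<and> l s \<le> b)"
    and doubling: "\<And>s. 0 < s \<Longrightarrow> s < d \<Longrightarrow> l (s/2) \<le> 2 * l s" and d: "0 < d"
  obtains c :: real where "0 < c"
    "\<And>x::'a::euclidean_space. norm x < 1 \<Longrightarrow> ennreal c * tail_integral l (1 - norm x) \<le> killing_density l x"
proof -
  have lnn: "0 \<le> l s" if "0 < s" "s < 1" for s
    using pos_of_locally_bounded_below[OF bounds that] by simp
  define \<delta> where "\<delta> = min (d/4) (1/4)"
  have \<delta>: "0 < \<delta>" "\<delta> < 1" "4 * \<delta> \<le> 1" "4 * \<delta> \<le> d" using d by (auto simp: \<delta>_def)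
  obtain b where b: "0 < b" "\<And>s. \<delta> \<le> s \<Longrightarrow> s < 1 \<Longrightarrow> l s \<le> b"
    using bounds[OF \<delta>(1,2)] by blast
  obtain a where a: "0 < a" "\<And>s. 3/4 \<le> s \<Longrightarrow> s < 1 \<Longrightarrow> a \<le> l s"
    using bounds[of "3/4"] by force
  define w where "w = real DIM('a) * measure lborel (ball (0::'a) (1/8))"
  have w: "0 < w" unfolding w_def using content_ball_pos[of "1/8" "0::'a"] by simp
  define c where "c = w * min (1/3) (a * \<delta> / (4 * b))"
  show ?thesis
  proof (rule that)
    show "0 < c" using w a b \<delta> by (simp add: c_def)
    fix x :: 'a assume x: "norm x < 1"
    show "ennreal c * tail_integral l (1 - norm x) \<le> killing_density l x"
    proof (cases "1 - norm x \<le> \<delta>")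
      case True
      have "c \<le> w / 3"
        unfolding c_def using w mult_left_mono[of "min (1/3) (a * \<delta> / (4 * b))" "1/3" w] by simp
      then have "ennreal c * tail_integral l (1 - norm x) \<le> ennreal (w / 3) * tail_integral l (1 - norm x)"
        by (intro mult_right_mono ennreal_leI) simp_all
      also have "\<dots> \<le> killing_density l x"
        unfolding w_def using True \<delta> x by (intro killing_density_ge_tail_near_sphere[OF l lnn doubling]) auto
      finally show ?thesis .
    next
      case False
      have "c \<le> w * (a * \<delta> / (4 * b))"
        unfolding c_def using w by (intro mult_left_mono) auto
      then have "ennreal c * tail_integral l (1 - norm x) \<le> ennreal (w * (a * \<delta> / (4 * b))) * tail_integral l (1 - norm x)"
        by (intro mult_right_mono ennreal_leI) simp_all
      also have "\<dots> \<le> killing_density l x"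
        unfolding w_def using False a b \<delta> by (intro killing_density_ge_tail_interior[OF l lnn]) auto
      finally show ?thesis .
    qed
  qed
qed

lemma energy_ge_Mfun_weighted_integral:
  fixes J :: "'a::euclidean_space \<Rightarrow> 'a \<Rightarrow> real" and l :: "real \<Rightarrow> real"
  assumes kernel: "\<And>x y. truncated_kernel l (y - x) \<le> J x y"
    and l[measurable]: "l \<in> borel_measurable borel"
    and lnn: "\<And>s. 0 < s \<Longrightarrow> s < 1 \<Longrightarrow> 0 \<le> l s"
    and c: "0 < c"
    and killing: "\<And>x::'a. norm x < 1 \<Longrightarrow> ennreal c * tail_integral l (1 - norm x) \<le> killing_density l x"
    and u: "u \<in> HJ0 J (ball 0 1)"
  shows "ennreal (c/2) * (\<integral>\<^sup>+ x \<in> ball 0 1. ennreal ((u x)\<^sup>2 * Mfun l (1 - norm x)) \<partial>lebesgue)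
    \<le> energy J (ball 0 1) u"
proof -
  obtain v where v[measurable]: "v \<in> borel_measurable borel" and uv: "AE x in lborel. u x = v x"
    and energy: "ennreal (1/2) * (\<integral>\<^sup>+ x. indicator (ball 0 1) x * ennreal ((v x)\<^sup>2) * killing_density l x \<partial>lborel)
      \<le> energy J (ball 0 1) u"
    using energy_ge_killing_integral[OF kernel l u] by blast
  have [measurable]: "(\<lambda>x::'a. tail_integral l (1 - norm x)) \<in> borel_measurable borel"
    by (rule borel_measurable_tail_integral[OF l]) measurable
  have [measurable]: "ball (0::'a) 1 \<in> sets borel" by simp
  have meas: "(\<lambda>x. indicator (ball 0 1) x * ennreal ((v x)\<^sup>2) * tail_integral l (1 - norm x)) \<in> borel_measurable lborel"
    by measurable
  have Mfun_le: "(\<integral>\<^sup>+ x \<in> ball 0 1. ennreal ((u x)\<^sup>2 * Mfun l (1 - norm x)) \<partial>lebesgue)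
      \<le> (\<integral>\<^sup>+ x. indicator (ball 0 1) x * ennreal ((v x)\<^sup>2) * tail_integral l (1 - norm x) \<partial>lborel)"
    unfolding nn_integral_completion
  proof (rule nn_integral_mono_AE)
    show "AE x in lborel. ennreal ((u x)\<^sup>2 * Mfun l (1 - norm x)) * indicator (ball 0 1) x
        \<le> indicator (ball 0 1) x * ennreal ((v x)\<^sup>2) * tail_integral l (1 - norm x)"
      using uv
    proof eventually_elim
      case (elim x)
      have "ennreal (Mfun l (1 - norm x)) \<le> tail_integral l (1 - norm x)" if "norm x < 1"
        using that by (intro Mfun_le_tail_integral[OF l lnn]) auto
      then show ?case using elim by (auto simp: ennreal_mult' mult_left_mono split: split_indicator)
    qed
  qed
  have half: "ennreal (c/2) = ennreal (1/2) * ennreal c"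
    by (subst ennreal_mult'[symmetric]) simp_all
  have "ennreal (c/2) * (\<integral>\<^sup>+ x \<in> ball 0 1. ennreal ((u x)\<^sup>2 * Mfun l (1 - norm x)) \<partial>lebesgue)
      \<le> ennreal (c/2) * (\<integral>\<^sup>+ x. indicator (ball 0 1) x * ennreal ((v x)\<^sup>2) * tail_integral l (1 - norm x) \<partial>lborel)"
    using Mfun_le by (rule mult_left_mono) simp
  also have "\<dots> = ennreal (1/2) * (ennreal c * (\<integral>\<^sup>+ x. indicator (ball 0 1) x * ennreal ((v x)\<^sup>2) * tail_integral l (1 - norm x) \<partial>lborel))"
    unfolding half by (rule mult.assoc)
  also have "\<dots> = ennreal (1/2) * (\<integral>\<^sup>+ x. (indicator (ball 0 1) x * ennreal ((v x)\<^sup>2)) * (ennreal c * tail_integral l (1 - norm x)) \<partial>lborel)"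
    using nn_integral_cmult[symmetric, OF meas, of c] by (simp add: mult_ac)
  also have "\<dots> \<le> ennreal (1/2) * (\<integral>\<^sup>+ x. indicator (ball 0 1) x * ennreal ((v x)\<^sup>2) * killing_density l x \<partial>lborel)"
  proof (rule mult_left_mono[OF nn_integral_mono])
    fix x :: 'a
    show "indicator (ball 0 1) x * ennreal ((v x)\<^sup>2) * (ennreal c * tail_integral l (1 - norm x))
        \<le> indicator (ball 0 1) x * ennreal ((v x)\<^sup>2) * killing_density l x"
      using killing[of x] by (cases "norm x < 1") (auto intro: mult_left_mono)
  qed simp
  also have "\<dots> \<le> energy J (ball 0 1) u" by (rule energy)
  finally show ?thesis .
qed

theorem mainTheorem5:
  fixes J :: "'a::euclidean_space \<Rightarrow> 'a \<Rightarrow> real"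
    and K :: "'a \<Rightarrow> real"
    and l :: "real \<Rightarrow> real"
  assumes J_meas: "(\<lambda>z. J (fst z) (snd z)) \<in> borel_measurable lebesgue"
    and J_nonneg: "\<And>x y. J x y \<ge> 0"
    and J_sym: "\<And>x y. J x y = J y x"
    and J_int: "\<exists>C::real. \<forall>x. (\<integral>\<^sup>+ y. ennreal (min 1 ((norm (x - y))\<^sup>2) * J x y) \<partial>lebesgue) \<le> ennreal C"
    and K_nonneg: "\<And>z. K z \<ge> 0"
    and J_K: "\<And>x y. J x y \<ge> K (x - y)"
    and K_not_L1: "\<And>\<epsilon>. \<epsilon> > 0 \<Longrightarrow> (\<integral>\<^sup>+ z \<in> ball 0 \<epsilon>. ennreal (K z) \<partial>lebesgue) = \<infinity>"
    and l_meas: "l \<in> borel_measurable borel"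
    and l_bounds: "\<And>\<epsilon>. 0 < \<epsilon> \<Longrightarrow> \<epsilon> < 1 \<Longrightarrow>
        \<exists>a b. 0 < a \<and> 0 < b \<and> (\<forall>s. \<epsilon> \<le> s \<and> s < 1 \<longrightarrow> a \<le> l s \<and> l s \<le> b)"
    and K_form: "\<And>z. 0 < norm z \<Longrightarrow> norm z < 1 \<Longrightarrow>
        K z = norm z powr (- real DIM('a)) * l (norm z)"
    and M_infty: "filterlim (Mfun l) at_top (at_right 0)"
    and H2: "\<And>t. t > 0 \<Longrightarrow> ((\<lambda>s. l (t * s) / l s) \<longlongrightarrow> 1) (at_right 0)"
  shows "\<exists>c>0. \<forall>u \<in> HJ0 J (ball 0 1).
           energy J (ball 0 1) u \<ge>
             ennreal c * (\<integral>\<^sup>+ x \<in> ball 0 1. ennreal ((u x)\<^sup>2 * Mfun l (1 - norm x)) \<partial>lebesgue)"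
proof -
  have l_pos: "0 < l s" if "0 < s" "s < 1" for s
    using pos_of_locally_bounded_below[OF l_bounds that] .
  obtain d where "0 < d" and doubling: "\<And>s. 0 < s \<Longrightarrow> s < d \<Longrightarrow> l (s/2) \<le> 2 * l s"
    using doubling_at_right_0[OF l_pos H2[of "1/2"]] by auto
  obtain c where "0 < c"
    and killing: "\<And>x::'a. norm x < 1 \<Longrightarrow> ennreal c * tail_integral l (1 - norm x) \<le> killing_density l x"
    using killing_density_ge_tail[OF l_meas l_bounds doubling \<open>0 < d\<close>] by blast
  have kernel: "truncated_kernel l (y - x) \<le> J x y" for x y
    by (rule truncated_kernel_le_J[OF J_sym K_nonneg J_K K_form])
  show ?thesis
    using energy_ge_Mfun_weighted_integral[OF kernel l_meas _ \<open>0 < c\<close> killing] l_pos \<open>0 < c\<close>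
    by (intro exI[of _ "c/2"]) (auto intro: less_imp_le)
qed

end
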